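(* Let $p(L,M,D;\mu\to1)$ be a generative reasoning model, let $\alpha\in L$, and let $\Delta\subseteq L$ be finite. Then $$p(\alpha\mid\Delta)=\frac{\sum_{m\in[\![\Delta]\!]_p^{\max}\cap[\![\alpha]\!]_p}p(m)}{\sum_{m\in[\![\Delta]\!]_p^{\max}}p(m)}.$$
   Context: Fix a multiset of data $\{d_1,\dots,d_K\}$ with $K\ge1$, and a propositional language $L$ over finitely many atoms, with set of models (truth assignments) $\mathcal M$. A function $m:\{d_1,\dots,d_K\}\to\mathcal M$ assigns to each datum the model it supports. The probability of a model $n$ is $p(n)=|\{k:m(d_k)=n\}|/K$. For $\mu\in(0,1)$ and $\alpha\in L$, set $p(\alpha\mid m)=\mu$ if $m$ satisfies $\alpha$ and $1-\mu$ otherwise. For finite $\Delta$, set $p(\Delta\mid m)=\prod_{\beta\in\Delta}p(\beta\mid m)$, which is $1$ for empty $\Delta$. In $p(L,M,D;\mu\to1)$, $$p(\alpha\mid\Delta)=\lim_{\mu\to1^-}\frac{\sum_{m}p(\alpha\mid m)p(\Delta\mid m)p(m)}{\sum_m p(\Delta\mid m)p(m)}.$$ Notation and definitions: - For $S\subseteq L$, $[\![S]\!]$ is the set of models satisfying every formula of $S$, $[\![\alpha]\!]=[\![\{\alpha\}]\!]$, and $[\![S]\!]_p=\{m\in[\![S]\!]:p(m)\neq0\}$. - $S\subseteq\Delta$ is a maximal possible subset of $\Delta$ if $[\![S]\!]_p\neq\emptyset$ and $[\![S\cup\{\beta\}]\!]_p=\emptyset$ for all $\beta\in\Delta\setminus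 S$. - $MPS(\Delta)$ is the set of maximal possible subsets of $\Delta$ of maximum cardinality. - $[\![\Delta]\!]_p^{\max}=\bigcup_{S\in MPS(\Delta)}[\![S]\!]_p$. *)

theory Defs
  imports Complex_Main
begin

datatype 'a form = Atom 'a | TT | FF | Neg "'a form" | Conj "'a form" "'a form"
  | Disj "'a form" "'a form" | Imp "'a form" "'a form"

type_synonym 'a model = "'a \<Rightarrow> bool"

fun sat :: "'a model \<Rightarrow> 'a form \<Rightarrow> bool" where
  "sat v (Atom a) = v a"
| "sat v TT = True"
| "sat v FF = False"
| "sat v (Neg f) = (\<not> sat v f)"
| "sat v (Conj f g) = (sat v f \<and> sat v g)"
| "sat v (Disj f g) = (sat v f \<or> sat v g)"
| "sat v (Imp f g) = (sat v f \<longrightarrow> sat v g)"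

text \<open>Data D = [d_1,...,d_K] (a list, i.e. a multiset with order), m maps data to models.
  p(n) = |{k. m(d_k) = n}| / K.\<close>
definition prob :: "'d list \<Rightarrow> ('d \<Rightarrow> 'a model) \<Rightarrow> 'a model \<Rightarrow> real" where
  "prob D m n = real (card {k. k < length D \<and> m (D ! k) = n}) / real (length D)"

definition lik :: "real \<Rightarrow> 'a form \<Rightarrow> 'a model \<Rightarrow> real" where
  "lik \<mu> \<alpha> n = (if sat n \<alpha> then \<mu> else 1 - \<mu>)"

definition likS :: "real \<Rightarrow> 'a form set \<Rightarrow> 'a model \<Rightarrow> real" where
  "likS \<mu> \<Delta> n = (\<Prod>\<beta>\<in>\<Delta>. lik \<mu> \<beta> n)"

text \<open>The ratio inside the limit defining p(alpha | Delta).\<close>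
definition cond_ratio :: "'d list \<Rightarrow> ('d \<Rightarrow> ('a::finite) model) \<Rightarrow> real \<Rightarrow> 'a form \<Rightarrow> 'a form set \<Rightarrow> real" where
  "cond_ratio D m \<mu> \<alpha> \<Delta> =
     (\<Sum>n\<in>UNIV. lik \<mu> \<alpha> n * likS \<mu> \<Delta> n * prob D m n) / (\<Sum>n\<in>UNIV. likS \<mu> \<Delta> n * prob D m n)"

definition models :: "'a form set \<Rightarrow> 'a model set" where
  "models S = {n. \<forall>\<beta>\<in>S. sat n \<beta>}"

definition models_p :: "'d list \<Rightarrow> ('d \<Rightarrow> 'a model) \<Rightarrow> 'a form set \<Rightarrow> 'a model set" where
  "models_p D m S = {n \<in> models S. prob D m n \<noteq> 0}"

definition max_possible_subset :: "'d list \<Rightarrow> ('d \<Rightarrow> 'a model) \<Rightarrow> 'a form set \<Rightarrow> 'a form set \<Rightarrow> bool" where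
  "max_possible_subset D m \<Delta> S \<longleftrightarrow> S \<subseteq> \<Delta> \<and> models_p D m S \<noteq> {} \<and>
     (\<forall>\<beta>\<in>\<Delta> - S. models_p D m (insert \<beta> S) = {})"

definition MPS :: "'d list \<Rightarrow> ('d \<Rightarrow> 'a model) \<Rightarrow> 'a form set \<Rightarrow> 'a form set set" where
  "MPS D m \<Delta> = {S. max_possible_subset D m \<Delta> S \<and>
     (\<forall>S'. max_possible_subset D m \<Delta> S' \<longrightarrow> card S' \<le> card S)}"

definition models_p_max :: "'d list \<Rightarrow> ('d \<Rightarrow> 'a model) \<Rightarrow> 'a form set \<Rightarrow> 'a model set" where
  "models_p_max D m \<Delta> = (\<Union>S\<in>MPS D m \<Delta>. models_p D m S)"

end

theory Submission
  imports Defs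
begin

text \<open>Let \<open>k(n)\<close> be the number of formulas of \<open>\<Delta>\<close> true in the model \<open>n\<close>, so that
  \<open>p(\<Delta> | n) = \<mu>^k(n) (1 - \<mu>)^(|\<Delta>| - k(n))\<close>, and let \<open>s\<close> be the largest \<open>k(n)\<close> over the
  models \<open>n = m(d)\<close> supported by the data. After dividing numerator and denominator by
  \<open>\<mu>^s (1 - \<mu>)^(|\<Delta>| - s)\<close>, the weight of a supported model tends, as \<open>\<mu>\<close> tends to 1, to
  \<open>p(n)\<close> if \<open>k(n) = s\<close> and to \<open>0\<close> otherwise. On the logical side, every possible subset of
  \<open>\<Delta>\<close> has at most \<open>s\<close> elements, while the formulas true in a supported model with
  \<open>k(n) = s\<close> form a maximal possible subset with exactly \<open>s\<close> elements; hence
  \<open>[[\<Delta>]]_p^max\<close> consists precisely of the supported models with \<open>k(n) = s\<close>.\<close>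

definition sat_count :: "'a form set \<Rightarrow> 'a model \<Rightarrow> nat" where
  "sat_count \<Delta> n = card {\<beta>\<in>\<Delta>. sat n \<beta>}"

definition max_sat_count :: "'d list \<Rightarrow> ('d \<Rightarrow> 'a model) \<Rightarrow> 'a form set \<Rightarrow> nat" where
  "max_sat_count D m \<Delta> = Max (sat_count \<Delta> ` m ` set D)"

lemma prob_nonneg: "prob D m n \<ge> 0"
  unfolding prob_def by simp

lemma prob_neq_0_iff: "prob D m n \<noteq> 0 \<longleftrightarrow> n \<in> m ` set D"
proof -
  have "card {k. k < length D \<and> m (D ! k) = n} \<noteq> 0 \<longleftrightarrow> (\<exists>k < length D. m (D ! k) = n)"
    by auto
  also have "\<dots> \<longleftrightarrow> n \<in> m ` set D"
    by (metis imageE image_eqI in_set_conv_nth)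
  finally show ?thesis
    unfolding prob_def by auto
qed

lemma models_p_iff: "n \<in> models_p D m S \<longleftrightarrow> n \<in> m ` set D \<and> (\<forall>\<beta>\<in>S. sat n \<beta>)"
  by (auto simp: models_p_def models_def prob_neq_0_iff)

lemma sat_count_le_card: "finite \<Delta> \<Longrightarrow> sat_count \<Delta> n \<le> card \<Delta>"
  unfolding sat_count_def by (intro card_mono) auto

lemma sat_count_le_max_sat_count: "n \<in> m ` set D \<Longrightarrow> sat_count \<Delta> n \<le> max_sat_count D m \<Delta>"
  unfolding max_sat_count_def by simp

lemma max_sat_count_attained:
  assumes "D \<noteq> []"
  obtains n where "n \<in> m ` set D" "sat_count \<Delta> n = max_sat_count D m \<Delta>"
proof -
  have "max_sat_count D m \<Delta> \<in> sat_count \<Delta> ` m ` set D"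
    unfolding max_sat_count_def using assms by (simp add: Max_in)
  then show ?thesis
    using that by (metis imageE)
qed

lemma card_le_max_sat_count:
  assumes "finite \<Delta>" "S \<subseteq> \<Delta>" "models_p D m S \<noteq> {}"
  shows "card S \<le> max_sat_count D m \<Delta>"
proof -
  obtain n where "n \<in> models_p D m S"
    using assms(3) by blast
  then have n: "n \<in> m ` set D" "\<forall>\<beta>\<in>S. sat n \<beta>"
    by (simp_all add: models_p_iff)
  then have "card S \<le> sat_count \<Delta> n"
    unfolding sat_count_def using assms(1,2) by (intro card_mono) auto
  also have "\<dots> \<le> max_sat_count D m \<Delta>"
    using n(1) by (rule sat_count_le_max_sat_count)
  finally show ?thesis .
qed

lemma satisfied_subset_in_MPS:
  assumes "finite \<Delta>" "n \<in> m ` set D" "sat_count \<Delta> n = max_sat_count D m \<Delta>"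
  shows "{\<beta>\<in>\<Delta>. sat n \<beta>} \<in> MPS D m \<Delta>"
proof -
  let ?S = "{\<beta>\<in>\<Delta>. sat n \<beta>}"
  have possible: "n \<in> models_p D m ?S"
    using assms(2) by (simp add: models_p_iff)
  have maximal: "models_p D m (insert \<beta> ?S) = {}" if "\<beta> \<in> \<Delta> - ?S" for \<beta>
  proof (rule ccontr)
    assume "models_p D m (insert \<beta> ?S) \<noteq> {}"
    then have "card (insert \<beta> ?S) \<le> max_sat_count D m \<Delta>"
      using that assms(1) by (intro card_le_max_sat_count) auto
    moreover have "card (insert \<beta> ?S) = Suc (sat_count \<Delta> n)"
      using that assms(1) by (simp add: sat_count_def)
    ultimately show False
      using assms(3) by simp
  qed
  have "max_possible_subset D m \<Delta> ?S"
    using possible maximal unfolding max_possible_subset_def by blast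
  moreover have "card S' \<le> card ?S" if "max_possible_subset D m \<Delta> S'" for S'
    using that assms card_le_max_sat_count[of \<Delta> S' D m]
    unfolding max_possible_subset_def sat_count_def by auto
  ultimately show ?thesis
    unfolding MPS_def by blast
qed

lemma card_MPS:
  assumes "D \<noteq> []" "finite \<Delta>" "S \<in> MPS D m \<Delta>"
  shows "card S = max_sat_count D m \<Delta>"
proof -
  obtain n where n: "n \<in> m ` set D" "sat_count \<Delta> n = max_sat_count D m \<Delta>"
    using max_sat_count_attained[OF assms(1)] .
  have "max_sat_count D m \<Delta> \<le> card S"
    using satisfied_subset_in_MPS[OF assms(2) n] assms(3) n(2)
    unfolding MPS_def sat_count_def by auto
  moreover have "card S \<le> max_sat_count D m \<Delta>"
    using assms(2,3) by (intro card_le_max_sat_count) (auto simp: MPS_def max_possible_subset_def)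
  ultimately show ?thesis
    by simp
qed

lemma models_p_max_iff:
  assumes "D \<noteq> []" "finite \<Delta>"
  shows "n \<in> models_p_max D m \<Delta> \<longleftrightarrow> n \<in> m ` set D \<and> sat_count \<Delta> n = max_sat_count D m \<Delta>"
proof
  assume "n \<in> models_p_max D m \<Delta>"
  then obtain S where S: "S \<in> MPS D m \<Delta>" "n \<in> models_p D m S"
    unfolding models_p_max_def by blast
  have n: "n \<in> m ` set D" "\<forall>\<beta>\<in>S. sat n \<beta>"
    using S(2) by (simp_all add: models_p_iff)
  have "S \<subseteq> \<Delta>"
    using S(1) by (simp add: MPS_def max_possible_subset_def)
  have "max_sat_count D m \<Delta> = card S"
    using card_MPS[OF assms S(1)] by simp
  also have "\<dots> \<le> sat_count \<Delta> n"
    unfolding sat_count_def using n(2) \<open>S \<subseteq> \<Delta>\<close> assms(2) by (intro card_mono) auto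
  finally have "max_sat_count D m \<Delta> \<le> sat_count \<Delta> n" .
  with sat_count_le_max_sat_count[OF n(1)] have "sat_count \<Delta> n = max_sat_count D m \<Delta>"
    by (rule le_antisym)
  with n(1) show "n \<in> m ` set D \<and> sat_count \<Delta> n = max_sat_count D m \<Delta>"
    by blast
next
  assume "n \<in> m ` set D \<and> sat_count \<Delta> n = max_sat_count D m \<Delta>"
  then have n: "n \<in> m ` set D" "sat_count \<Delta> n = max_sat_count D m \<Delta>"
    by simp_all
  from assms(2) n have "{\<beta>\<in>\<Delta>. sat n \<beta>} \<in> MPS D m \<Delta>"
    by (rule satisfied_subset_in_MPS)
  moreover have "n \<in> models_p D m {\<beta>\<in>\<Delta>. sat n \<beta>}"
    using n(1) by (simp add: models_p_iff)
  ultimately show "n \<in> models_p_max D m \<Delta>"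
    unfolding models_p_max_def by blast
qed

lemma models_p_max_subset:
  assumes "D \<noteq> []" "finite \<Delta>"
  shows "models_p_max D m \<Delta> \<subseteq> m ` set D"
  using models_p_max_iff[OF assms] by blast

lemma sum_prob_models_p_max_pos:
  assumes "D \<noteq> []" "finite \<Delta>"
  shows "(\<Sum>n\<in>models_p_max D m \<Delta>. prob D m n) > 0"
proof (rule sum_pos)
  show "finite (models_p_max D m \<Delta>)"
    using models_p_max_subset[OF assms] by (rule finite_subset) simp
  obtain n where "n \<in> m ` set D" "sat_count \<Delta> n = max_sat_count D m \<Delta>"
    using max_sat_count_attained[OF assms(1)] .
  then show "models_p_max D m \<Delta> \<noteq> {}"
    using models_p_max_iff[OF assms] by blast
  show "prob D m n > 0" if "n \<in> models_p_max D m \<Delta>" for n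
    using that models_p_max_subset[OF assms] prob_neq_0_iff[of D m n] prob_nonneg[of D m n]
    by auto
qed

lemma likS_eq_power:
  assumes "finite \<Delta>"
  shows "likS \<mu> \<Delta> n = \<mu> ^ sat_count \<Delta> n * (1 - \<mu>) ^ (card \<Delta> - sat_count \<Delta> n)"
proof -
  let ?T = "{\<beta>. sat n \<beta>}"
  have "likS \<mu> \<Delta> n = (\<Prod>\<beta>\<in>\<Delta> \<inter> ?T. \<mu>) * (\<Prod>\<beta>\<in>\<Delta> \<inter> - ?T. 1 - \<mu>)"
    unfolding likS_def lik_def using assms by (rule prod.If_cases)
  also have "\<dots> = \<mu> ^ card (\<Delta> \<inter> ?T) * (1 - \<mu>) ^ card (\<Delta> - ?T)"
    by (simp add: Diff_eq)
  also have "card (\<Delta> - ?T) = card \<Delta> - card (\<Delta> \<inter> ?T)"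
    using assms by (simp add: card_Diff_subset_Int)
  also have "\<Delta> \<inter> ?T = {\<beta>\<in>\<Delta>. sat n \<beta>}"
    by blast
  finally show ?thesis
    unfolding sat_count_def .
qed

lemma tendsto_lik_at_left_1:
  "((\<lambda>\<mu>. lik \<mu> \<alpha> n) \<longlongrightarrow> (if sat n \<alpha> then 1 else 0)) (at_left 1)"
  unfolding lik_def by (cases "sat n \<alpha>") (auto intro!: tendsto_eq_intros)

lemma eventually_at_left_1_in_unit_interval: "\<forall>\<^sub>F \<mu> in at_left 1. \<mu> \<in> {0<..<1::real}"
  by (rule eventually_at_left_real) simp

lemma tendsto_power_ratio_at_left_1:
  fixes k s N :: nat
  assumes "k \<le> s" "s \<le> N"
  shows "((\<lambda>\<mu>::real. \<mu> ^ k * (1 - \<mu>) ^ (N - k) / (\<mu> ^ s * (1 - \<mu>) ^ (N - s)))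
           \<longlongrightarrow> (if k = s then 1 else 0)) (at_left 1)"
proof -
  define j where "j = s - k"
  have j: "s = k + j" "N - k = (N - s) + j"
    using assms unfolding j_def by auto
  have "((\<lambda>\<mu>::real. ((1 - \<mu>) / \<mu>) ^ j) \<longlongrightarrow> ((1 - 1) / 1) ^ j) (at_left 1)"
    by (intro tendsto_intros) auto
  moreover have "\<forall>\<^sub>F \<mu> in at_left (1::real). ((1 - \<mu>) / \<mu>) ^ j =
      \<mu> ^ k * (1 - \<mu>) ^ (N - k) / (\<mu> ^ s * (1 - \<mu>) ^ (N - s))"
    using eventually_at_left_1_in_unit_interval
  proof (rule eventually_mono)
    fix \<mu> :: real
    assume "\<mu> \<in> {0<..<1}"
    then show "((1 - \<mu>) / \<mu>) ^ j = \<mu> ^ k * (1 - \<mu>) ^ (N - k) / (\<mu> ^ s * (1 - \<mu>) ^ (N - s))"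
      unfolding j by (simp add: power_add power_divide)
  qed
  ultimately have "((\<lambda>\<mu>::real. \<mu> ^ k * (1 - \<mu>) ^ (N - k) / (\<mu> ^ s * (1 - \<mu>) ^ (N - s)))
      \<longlongrightarrow> ((1 - 1) / 1) ^ j) (at_left 1)"
    by (rule Lim_transform_eventually)
  moreover have "((1 - 1) / 1) ^ j = (if k = s then 1 else (0::real))"
    using j by simp
  ultimately show ?thesis
    by simp
qed

lemma tendsto_scaled_likS_prob:
  fixes D :: "'d list" and m :: "'d \<Rightarrow> 'a model" and \<Delta> :: "'a form set"
  assumes "D \<noteq> []" "finite \<Delta>"
  defines "s \<equiv> max_sat_count D m \<Delta>"
  shows "((\<lambda>\<mu>. likS \<mu> \<Delta> n * prob D m n / (\<mu> ^ s * (1 - \<mu>) ^ (card \<Delta> - s)))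
           \<longlongrightarrow> (if n \<in> models_p_max D m \<Delta> then prob D m n else 0)) (at_left 1)"
proof (cases "n \<in> m ` set D")
  case False
  then have "prob D m n = 0" and "n \<notin> models_p_max D m \<Delta>"
    using prob_neq_0_iff models_p_max_subset[OF assms(1,2)] by blast+
  then show ?thesis
    by simp
next
  case True
  obtain n' where "n' \<in> m ` set D" "sat_count \<Delta> n' = s"
    using max_sat_count_attained[OF assms(1)] unfolding s_def .
  then have "s \<le> card \<Delta>"
    using sat_count_le_card[OF assms(2)] by metis
  moreover have "sat_count \<Delta> n \<le> s"
    using True unfolding s_def by (rule sat_count_le_max_sat_count)
  ultimately have "((\<lambda>\<mu>. likS \<mu> \<Delta> n / (\<mu> ^ s * (1 - \<mu>) ^ (card \<Delta> - s)))
      \<longlongrightarrow> (if sat_count \<Delta> n = s then 1 else 0)) (at_left 1)"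
    unfolding likS_eq_power[OF assms(2)] by (intro tendsto_power_ratio_at_left_1)
  then have "((\<lambda>\<mu>. likS \<mu> \<Delta> n / (\<mu> ^ s * (1 - \<mu>) ^ (card \<Delta> - s)) * prob D m n)
      \<longlongrightarrow> (if sat_count \<Delta> n = s then 1 else 0) * prob D m n) (at_left 1)"
    by (rule tendsto_mult_right)
  moreover have "(if sat_count \<Delta> n = s then 1 else 0) * prob D m n
      = (if n \<in> models_p_max D m \<Delta> then prob D m n else 0)"
    using True by (simp add: models_p_max_iff[OF assms(1,2)] s_def)
  ultimately show ?thesis
    unfolding times_divide_eq_left by simp
qed

lemma tendsto_weighted_scaled_sum:
  fixes D :: "'d list" and m :: "'d \<Rightarrow> ('a::finite) model" and \<Delta> :: "'a form set"
    and g :: "real \<Rightarrow> 'a model \<Rightarrow> real"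
  assumes "D \<noteq> []" "finite \<Delta>" "\<And>n. ((\<lambda>\<mu>. g \<mu> n) \<longlongrightarrow> a n) (at_left 1)"
  defines "s \<equiv> max_sat_count D m \<Delta>"
  shows "((\<lambda>\<mu>. \<Sum>n\<in>UNIV. g \<mu> n * (likS \<mu> \<Delta> n * prob D m n / (\<mu> ^ s * (1 - \<mu>) ^ (card \<Delta> - s))))
           \<longlongrightarrow> (\<Sum>n\<in>models_p_max D m \<Delta>. a n * prob D m n)) (at_left 1)"
proof -
  have "((\<lambda>\<mu>. \<Sum>n\<in>UNIV. g \<mu> n * (likS \<mu> \<Delta> n * prob D m n / (\<mu> ^ s * (1 - \<mu>) ^ (card \<Delta> - s))))
      \<longlongrightarrow> (\<Sum>n\<in>UNIV. a n * (if n \<in> models_p_max D m \<Delta> then prob D m n else 0))) (at_left 1)"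
    unfolding s_def using assms(1,2) by (intro tendsto_sum tendsto_mult assms(3) tendsto_scaled_likS_prob)
  also have "(\<Sum>n\<in>UNIV. a n * (if n \<in> models_p_max D m \<Delta> then prob D m n else 0))
      = (\<Sum>n\<in>models_p_max D m \<Delta>. a n * prob D m n)"
    by (intro sum.mono_neutral_cong_right) auto
  finally show ?thesis .
qed

lemma cond_ratio_rescale:
  assumes "c \<noteq> 0"
  shows "cond_ratio D m \<mu> \<alpha> \<Delta> =
    (\<Sum>n\<in>UNIV. lik \<mu> \<alpha> n * (likS \<mu> \<Delta> n * prob D m n / c)) / (\<Sum>n\<in>UNIV. likS \<mu> \<Delta> n * prob D m n / c)"
proof -
  have "(\<Sum>n\<in>UNIV. lik \<mu> \<alpha> n * (likS \<mu> \<Delta> n * prob D m n / c))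
      = (\<Sum>n\<in>UNIV. lik \<mu> \<alpha> n * likS \<mu> \<Delta> n * prob D m n) / c"
    by (simp add: sum_divide_distrib mult.assoc)
  moreover have "(\<Sum>n\<in>UNIV. likS \<mu> \<Delta> n * prob D m n / c) = (\<Sum>n\<in>UNIV. likS \<mu> \<Delta> n * prob D m n) / c"
    by (simp add: sum_divide_distrib)
  ultimately show ?thesis
    using assms unfolding cond_ratio_def by simp
qed

theorem theorem4:
  fixes D :: "'d list" and m :: "'d \<Rightarrow> ('a::finite) model"
    and \<alpha> :: "'a form" and \<Delta> :: "'a form set"
  assumes "D \<noteq> []" and "finite \<Delta>"
  shows "((\<lambda>\<mu>. cond_ratio D m \<mu> \<alpha> \<Delta>) \<longlongrightarrow>
           (\<Sum>n\<in>models_p_max D m \<Delta> \<inter> models_p D m {\<alpha>}. prob D m n)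
             / (\<Sum>n\<in>models_p_max D m \<Delta>. prob D m n)) (at_left 1)"
proof -
  define scale :: "real \<Rightarrow> real" where
    "scale \<mu> = \<mu> ^ max_sat_count D m \<Delta> * (1 - \<mu>) ^ (card \<Delta> - max_sat_count D m \<Delta>)" for \<mu>
  let ?M = "models_p_max D m \<Delta>"
  let ?w = "\<lambda>\<mu> n. likS \<mu> \<Delta> n * prob D m n / scale \<mu>"
  have "((\<lambda>\<mu>. \<Sum>n\<in>UNIV. lik \<mu> \<alpha> n * ?w \<mu> n) \<longlongrightarrow>
      (\<Sum>n\<in>?M. (if sat n \<alpha> then 1 else 0) * prob D m n)) (at_left 1)"
    unfolding scale_def using assms tendsto_lik_at_left_1 by (rule tendsto_weighted_scaled_sum)
  moreover have "(\<Sum>n\<in>?M. (if sat n \<alpha> then 1 else 0) * prob D m n)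
      = (\<Sum>n\<in>?M \<inter> models_p D m {\<alpha>}. prob D m n)"
    using models_p_max_subset[OF assms, where m = m]
    by (intro sum.mono_neutral_cong_right) (auto simp: models_p_iff finite_subset)
  moreover have "((\<lambda>\<mu>. \<Sum>n\<in>UNIV. ?w \<mu> n) \<longlongrightarrow> (\<Sum>n\<in>?M. prob D m n)) (at_left 1)"
    using tendsto_weighted_scaled_sum[OF assms tendsto_const[of 1]] unfolding scale_def by simp
  ultimately have "((\<lambda>\<mu>. (\<Sum>n\<in>UNIV. lik \<mu> \<alpha> n * ?w \<mu> n) / (\<Sum>n\<in>UNIV. ?w \<mu> n)) \<longlongrightarrow>
      (\<Sum>n\<in>?M \<inter> models_p D m {\<alpha>}. prob D m n) / (\<Sum>n\<in>?M. prob D m n)) (at_left 1)"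
    using sum_prob_models_p_max_pos[OF assms, where m = m] by (intro tendsto_divide) auto
  moreover have "\<forall>\<^sub>F \<mu> in at_left 1.
      (\<Sum>n\<in>UNIV. lik \<mu> \<alpha> n * ?w \<mu> n) / (\<Sum>n\<in>UNIV. ?w \<mu> n) = cond_ratio D m \<mu> \<alpha> \<Delta>"
    using eventually_at_left_1_in_unit_interval
    by (rule eventually_mono) (intro cond_ratio_rescale[symmetric], simp add: scale_def)
  ultimately show ?thesis
    by (rule Lim_transform_eventually)
qed

end
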